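(* Assume the MDP satisfies the low-rank assumption with parameter $d$. For an arbitrary pair of policies $\pi^\theta=\{\pi^\theta_t\}_{t\in[H]}$ and $\pi^\beta=\{\pi^\beta_t\}_{t\in[H]}$, \[ \widehat{\operatorname{Dis}}\big(d_t^{\pi^\theta},d_t^{\pi^\beta}\big)\le\sum_{i=1}^t\big(\sqrt{dS^2A}\big)^{t-i}\,\|\pi^\theta_i-\pi^\beta_i\|_{\mathrm{op}}\qquad\text{for all }t\in[H]. \]
   Context: MDP: finite state space $\mathcal S$ ($S=|\mathcal S|$), finite action space $\mathcal A$ ($A=|\mathcal A|$), horizon $H$, transitions $P_t(\cdot\mid s,a)$, initial distribution $\mu_1$. Policies $\pi=\{\pi_t:\mathcal S\to\Delta(\mathcal A)\}$, with $s_1\sim\mu_1$, $a_t\sim\pi_t(\cdot\mid s_t)$, $s_{t+1}\sim P_t(\cdot\mid s_t,a_t)$; $d_t^\pi(s,a)=\Pr_\pi(s_t=s,a_t=a)$, viewed as an $S\times A$ matrix; $\pi_t$ is viewed as the $S\times A$ matrix with entries $\pi_t(a\mid s)$. $\|\cdot\|_{\mathrm{op}}$ is the spectral norm and $\widehat{\operatorname{Dis}}(p,q)=\|p-q\|_{\mathrm{op}}$. Low-rank assumption with parameter $d$: with $d'=\lfloor d/2\rfloor$, for each $t$ either $P_t(s'\mid s,a)=\sum_{i=1}^{d'}u_{t,i}(s',s)w_{t,i}(a)$ for all $s',s,a$, or $P_t(s'\mid s,a)=\sum_{i=1}^{d'}u_{t,i}(s)w_{t,i}(s',a)$ for all $s',s,a$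 (and each reward $r_t$ has rank at most $d'$). *)

theory Defs
  imports "HOL-Analysis.Analysis"
begin

definition opnorm :: "real^'a^'s \<Rightarrow> real" where
  "opnorm M = onorm (\<lambda>x. M *v x)"

definition as_mat :: "('s::finite \<Rightarrow> 'a::finite \<Rightarrow> real) \<Rightarrow> real^'a^'s" where
  "as_mat f = (\<chi> s a. f s a)"

text \<open>Occupancy measures. occ mu P pol n is d_{n+1}^pol (time steps are 1-based:
  pol t is the policy at step t, P t s a s' = P_t(s' | s, a)).\<close>
primrec occ :: "('s::finite \<Rightarrow> real) \<Rightarrow> (nat \<Rightarrow> 's \<Rightarrow> 'a::finite \<Rightarrow> 's \<Rightarrow> real)
    \<Rightarrow> (nat \<Rightarrow> 's \<Rightarrow> 'a \<Rightarrow> real) \<Rightarrow> nat \<Rightarrow> 's \<Rightarrow> 'a \<Rightarrow> real" where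
  "occ mu P pol 0 s a = mu s * pol 1 s a"
| "occ mu P pol (Suc n) s' a' =
     (\<Sum>s\<in>UNIV. \<Sum>a\<in>UNIV. occ mu P pol n s a * P (Suc n) s a s') * pol (Suc (Suc n)) s' a'"

definition dist_occ :: "('s::finite \<Rightarrow> real) \<Rightarrow> (nat \<Rightarrow> 's \<Rightarrow> 'a::finite \<Rightarrow> 's \<Rightarrow> real)
    \<Rightarrow> (nat \<Rightarrow> 's \<Rightarrow> 'a \<Rightarrow> real) \<Rightarrow> nat \<Rightarrow> 's \<Rightarrow> 'a \<Rightarrow> real" where
  "dist_occ mu P pol t = occ mu P pol (t - 1)"

definition is_policy :: "nat \<Rightarrow> (nat \<Rightarrow> 's::finite \<Rightarrow> 'a::finite \<Rightarrow> real) \<Rightarrow> bool" where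
  "is_policy H pol \<longleftrightarrow> (\<forall>t\<in>{1..H}. \<forall>s. (\<forall>a. pol t s a \<ge> 0) \<and> (\<Sum>a\<in>UNIV. pol t s a) = 1)"

definition low_rank_mdp :: "nat \<Rightarrow> nat \<Rightarrow> (nat \<Rightarrow> 's::finite \<Rightarrow> 'a::finite \<Rightarrow> 's \<Rightarrow> real)
    \<Rightarrow> (nat \<Rightarrow> 's \<Rightarrow> 'a \<Rightarrow> real) \<Rightarrow> bool" where
  "low_rank_mdp d H P r \<longleftrightarrow>
     (\<forall>t\<in>{1..H}.
        ((\<exists>(u :: nat \<Rightarrow> 's \<Rightarrow> 's \<Rightarrow> real) (w :: nat \<Rightarrow> 'a \<Rightarrow> real).
            \<forall>s' s a. P t s a s' = (\<Sum>i=1..d div 2. u i s' s * w i a))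
        \<or> (\<exists>(u :: nat \<Rightarrow> 's \<Rightarrow> real) (w :: nat \<Rightarrow> 's \<Rightarrow> 'a \<Rightarrow> real).
            \<forall>s' s a. P t s a s' = (\<Sum>i=1..d div 2. u i s * w i s' a)))
        \<and> rank (as_mat (r t)) \<le> d div 2)"

end

theory Submission
  imports Defs
begin

text \<open>Let nu_t(s') = sum_{s,a} d_t(s,a) P_t(s'|s,a) be the state distribution after step t,
  so that d_{t+1}(s',a') = nu_t(s') pi_{t+1}(a'|s'). The difference of the two occupancy matrices
  splits as diag(nu^theta) (pi^theta - pi^beta) + diag(nu^theta - nu^beta) pi^beta. Since nu^theta
  is a probability vector, the first term has operator norm at most |pi^theta - pi^beta|_op.
  Each entry of nu^theta - nu^beta is a Frobenius inner product of d^theta_t - d^beta_t with a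
  slice of the stochastic kernel, so by Cauchy-Schwarz the Frobenius norm of the second term is
  at most sqrt(SA) |d^theta_t - d^beta_t|_F <= sqrt(S^2 A) |d^theta_t - d^beta_t|_op.
  Unrolling this one-step recursion gives the geometric sum. The low-rank structure enters only
  through d >= 1: a kernel of rank zero cannot be stochastic.\<close>

definition is_dist :: "('x::finite \<Rightarrow> real) \<Rightarrow> bool" where
  "is_dist p \<longleftrightarrow> (\<forall>x. 0 \<le> p x) \<and> (\<Sum>x\<in>UNIV. p x) = 1"

lemma is_dist_le_one:
  assumes "is_dist p"
  shows "p x \<le> 1"
proof -
  have "p x \<le> (\<Sum>y\<in>UNIV. p y)"
    using assms by (intro member_le_sum) (auto simp: is_dist_def)
  then show ?thesis
    using assms by (simp add: is_dist_def)
qed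

lemma is_dist_sum_power2_le_one:
  assumes "is_dist p"
  shows "(\<Sum>x\<in>UNIV. p x ^ 2) \<le> 1"
proof -
  have "p x ^ 2 \<le> p x" for x
    using assms is_dist_le_one[OF assms, of x]
    by (simp add: is_dist_def power2_eq_square mult_left_le)
  then have "(\<Sum>x\<in>UNIV. p x ^ 2) \<le> (\<Sum>x\<in>UNIV. p x)"
    by (rule sum_mono)
  then show ?thesis
    using assms by (simp add: is_dist_def)
qed

lemma sum_UNIV_pair:
  "(\<Sum>x\<in>UNIV. f x) = (\<Sum>s\<in>UNIV. \<Sum>a\<in>UNIV. f (s, a))"
  by (simp add: sum.cartesian_product' flip: UNIV_Times_UNIV)

lemma sum_swap3:
  "(\<Sum>z\<in>C. \<Sum>x\<in>A. \<Sum>y\<in>B. f x y z) = (\<Sum>x\<in>A. \<Sum>y\<in>B. \<Sum>z\<in>C. f x y z)"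
  by (rule trans[OF sum.swap], rule sum.cong[OF refl], rule sum.swap)

lemma is_dist_mult_cond_dist:
  assumes "is_dist \<nu>" and "\<And>s. is_dist (p s)"
  shows "is_dist (\<lambda>(s, a). \<nu> s * p s a)"
proof -
  have "(\<Sum>s\<in>UNIV. \<Sum>a\<in>UNIV. \<nu> s * p s a) = (\<Sum>s\<in>UNIV. \<nu> s)"
    using assms(2) by (simp add: is_dist_def flip: sum_distrib_left)
  then show ?thesis
    using assms by (auto simp: is_dist_def sum_UNIV_pair)
qed

lemma opnorm_nonneg: "0 \<le> opnorm (M :: real^'a^'s)"
  unfolding opnorm_def by (rule onorm_pos_le[OF matrix_vector_mul_bounded_linear])

lemma norm_mult_le_opnorm: "norm (M *v x) \<le> opnorm M * norm x"
  unfolding opnorm_def by (rule onorm[OF matrix_vector_mul_bounded_linear])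

lemma opnorm_add_le: "opnorm (A + B :: real^'a^'s) \<le> opnorm A + opnorm B"
  unfolding opnorm_def matrix_vector_mult_add_rdistrib
  by (intro onorm_triangle matrix_vector_mul_bounded_linear)

lemma norm_power2_as_mat: "norm (as_mat f) ^ 2 = (\<Sum>s\<in>UNIV. \<Sum>a\<in>UNIV. f s a ^ 2)"
  unfolding power2_norm_eq_inner inner_vec_def by (simp add: as_mat_def power2_eq_square)

lemma opnorm_le_norm: "opnorm (M :: real^'a^'s) \<le> norm M"
  unfolding opnorm_def
proof (rule onorm_le)
  fix x :: "real^'a"
  have "norm (M *v x) \<le> norm (\<chi> s. norm (M $ s) * norm x)"
    unfolding matrix_mult_dot
    by (rule norm_le_componentwise_cart) (simp add: Cauchy_Schwarz_ineq2)
  also have "(\<chi> s. norm (M $ s) * norm x) = norm x *\<^sub>R (\<chi> s. norm (M $ s))"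
    by (simp add: vec_eq_iff)
  also have "norm \<dots> = norm M * norm x"
    unfolding norm_scaleR by (simp add: norm_vec_def mult.commute)
  finally show "norm (M *v x) \<le> norm M * norm x" .
qed

lemma norm_row_le_opnorm: "norm ((M :: real^'a^'s) $ s) \<le> opnorm M"
proof (cases "M $ s = 0")
  case False
  have "norm (M $ s) ^ 2 = (M *v M $ s) $ s"
    by (simp add: matrix_mult_dot power2_norm_eq_inner)
  also have "\<dots> \<le> norm (M *v M $ s)"
    using component_le_norm_cart[of "M *v M $ s" s] by simp
  also have "\<dots> \<le> opnorm M * norm (M $ s)"
    by (rule norm_mult_le_opnorm)
  finally show ?thesis
    using False by (simp add: power2_eq_square)
qed (simp add: opnorm_nonneg)

lemma norm_power2_le_card_opnorm:
  "norm (M :: real^'a^'s) ^ 2 \<le> real CARD('s) * opnorm M ^ 2"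
proof -
  have "norm M ^ 2 = (\<Sum>s\<in>UNIV. norm (M $ s) ^ 2)"
    by (simp add: norm_vec_def L2_set_def sum_nonneg)
  also have "\<dots> \<le> (\<Sum>s::'s\<in>UNIV. opnorm M ^ 2)"
    by (intro sum_mono power_mono norm_row_le_opnorm norm_ge_zero)
  finally show ?thesis
    by simp
qed

lemma opnorm_scale_rows_le:
  assumes "\<And>s. \<bar>v s\<bar> \<le> 1"
  shows "opnorm ((\<chi> s a. v s * M $ s $ a) :: real^'a^'s) \<le> opnorm M"
  unfolding opnorm_def
proof (rule onorm_le)
  fix x :: "real^'a"
  have "(\<chi> s a. v s * M $ s $ a) *v x = (\<chi> s. v s * (M *v x) $ s)"
    by (simp add: matrix_vector_mult_def vec_eq_iff sum_distrib_left mult.assoc)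
  also have "norm \<dots> \<le> norm (M *v x)"
    using assms by (intro norm_le_componentwise_cart) (simp add: abs_mult mult_left_le_one_le)
  also have "\<dots> \<le> onorm ((*v) M) * norm x"
    by (rule norm_mult_le_opnorm[unfolded opnorm_def])
  finally show "norm ((\<chi> s a. v s * M $ s $ a) *v x) \<le> onorm ((*v) M) * norm x" .
qed

definition next_state ::
    "('s::finite \<Rightarrow> 'a::finite \<Rightarrow> real) \<Rightarrow> ('s \<Rightarrow> 'a \<Rightarrow> 's \<Rightarrow> real) \<Rightarrow> 's \<Rightarrow> real" where
  "next_state D K s' = (\<Sum>s\<in>UNIV. \<Sum>a\<in>UNIV. D s a * K s a s')"

lemma next_state_eq_inner: "next_state D K s' = inner (as_mat D) (as_mat (\<lambda>s a. K s a s'))"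
  by (simp add: next_state_def inner_vec_def as_mat_def)

lemma is_dist_next_state:
  assumes "is_dist (\<lambda>(s, a). D s a)" and "\<And>s a. is_dist (K s a)"
  shows "is_dist (next_state D K)"
proof -
  have "(\<Sum>s'\<in>UNIV. next_state D K s') = (\<Sum>s\<in>UNIV. \<Sum>a\<in>UNIV. D s a * (\<Sum>s'\<in>UNIV. K s a s'))"
    unfolding next_state_def sum_distrib_left by (rule sum_swap3)
  also have "\<dots> = 1"
    using assms by (simp add: is_dist_def sum_UNIV_pair)
  finally show ?thesis
    using assms by (auto simp: is_dist_def next_state_def sum_UNIV_pair intro!: sum_nonneg)
qed

lemma sum_power2_next_state_diff_le:
  fixes D1 D2 :: "'s::finite \<Rightarrow> 'a::finite \<Rightarrow> real" and K :: "'s \<Rightarrow> 'a \<Rightarrow> 's \<Rightarrow> real"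
  assumes "\<And>s a. is_dist (K s a)"
  shows "(\<Sum>s'\<in>UNIV. (next_state D1 K s' - next_state D2 K s') ^ 2)
    \<le> real CARD('s) * real CARD('a) * norm (as_mat D1 - as_mat D2) ^ 2"
proof -
  define Q where "Q s' = as_mat (\<lambda>s a. K s a s')" for s'
  have "(next_state D1 K s' - next_state D2 K s') ^ 2 \<le> norm (as_mat D1 - as_mat D2) ^ 2 * norm (Q s') ^ 2"
    for s'
    unfolding next_state_eq_inner Q_def inner_diff_left[symmetric] power_mult_distrib[symmetric]
    by (metis Cauchy_Schwarz_ineq2 abs_ge_zero power2_abs power_mono)
  then have "(\<Sum>s'\<in>UNIV. (next_state D1 K s' - next_state D2 K s') ^ 2)
      \<le> norm (as_mat D1 - as_mat D2) ^ 2 * (\<Sum>s'\<in>UNIV. norm (Q s') ^ 2)"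
    by (simp add: sum_distrib_left sum_mono)
  also have "\<dots> \<le> norm (as_mat D1 - as_mat D2) ^ 2 * (real CARD('s) * real CARD('a))"
  proof (rule mult_left_mono)
    have "(\<Sum>s'\<in>UNIV. norm (Q s') ^ 2) = (\<Sum>s\<in>UNIV. \<Sum>a\<in>UNIV. \<Sum>s'\<in>UNIV. K s a s' ^ 2)"
      unfolding Q_def norm_power2_as_mat by (rule sum_swap3)
    also have "\<dots> \<le> (\<Sum>s::'s\<in>UNIV. \<Sum>a::'a\<in>UNIV. 1)"
      by (intro sum_mono is_dist_sum_power2_le_one assms)
    finally show "(\<Sum>s'\<in>UNIV. norm (Q s') ^ 2) \<le> real CARD('s) * real CARD('a)"
      by simp
  qed simp
  finally show ?thesis
    by (simp add: mult_ac)
qed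

lemma sqrt_sum_power2_next_state_diff_le:
  fixes D1 D2 :: "'s::finite \<Rightarrow> 'a::finite \<Rightarrow> real" and K :: "'s \<Rightarrow> 'a \<Rightarrow> 's \<Rightarrow> real"
  assumes "\<And>s a. is_dist (K s a)"
  shows "sqrt (\<Sum>s'\<in>UNIV. (next_state D1 K s' - next_state D2 K s') ^ 2)
    \<le> sqrt (real CARD('s) ^ 2 * real CARD('a)) * opnorm (as_mat D1 - as_mat D2)"
proof (rule real_le_lsqrt)
  have "(\<Sum>s'\<in>UNIV. (next_state D1 K s' - next_state D2 K s') ^ 2)
      \<le> real CARD('s) * real CARD('a) * norm (as_mat D1 - as_mat D2) ^ 2"
    using assms by (rule sum_power2_next_state_diff_le)
  also have "\<dots> \<le> real CARD('s) * real CARD('a) * (real CARD('s) * opnorm (as_mat D1 - as_mat D2) ^ 2)"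
    by (intro mult_left_mono norm_power2_le_card_opnorm) simp
  also have "\<dots> = (sqrt (real CARD('s) ^ 2 * real CARD('a)) * opnorm (as_mat D1 - as_mat D2)) ^ 2"
    by (simp add: power_mult_distrib power2_eq_square)
  finally show "(\<Sum>s'\<in>UNIV. (next_state D1 K s' - next_state D2 K s') ^ 2)
      \<le> (sqrt (real CARD('s) ^ 2 * real CARD('a)) * opnorm (as_mat D1 - as_mat D2)) ^ 2" .
qed (simp add: opnorm_nonneg)

lemma opnorm_diff_mult_cond_dist_le:
  fixes \<nu> \<nu>' :: "'s::finite \<Rightarrow> real" and p p' :: "'s \<Rightarrow> 'a::finite \<Rightarrow> real"
  assumes "is_dist \<nu>" and "\<And>s. is_dist (p' s)"
  shows "opnorm (as_mat (\<lambda>s a. \<nu> s * p s a) - as_mat (\<lambda>s a. \<nu>' s * p' s a))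
    \<le> opnorm (as_mat p - as_mat p') + sqrt (\<Sum>s\<in>UNIV. (\<nu> s - \<nu>' s) ^ 2)"
proof -
  define X :: "real^'a^'s" where "X = (\<chi> s a. \<nu> s * (as_mat p - as_mat p') $ s $ a)"
  define Y where "Y = as_mat (\<lambda>s a. (\<nu> s - \<nu>' s) * p' s a)"
  have "as_mat (\<lambda>s a. \<nu> s * p s a) - as_mat (\<lambda>s a. \<nu>' s * p' s a) = X + Y"
    by (simp add: X_def Y_def as_mat_def vec_eq_iff algebra_simps)
  then have "opnorm (as_mat (\<lambda>s a. \<nu> s * p s a) - as_mat (\<lambda>s a. \<nu>' s * p' s a))
      \<le> opnorm X + opnorm Y"
    by (simp add: opnorm_add_le)
  moreover have "opnorm X \<le> opnorm (as_mat p - as_mat p')"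
    unfolding X_def using assms(1)
    by (intro opnorm_scale_rows_le) (simp add: is_dist_le_one is_dist_def)
  moreover have "opnorm Y \<le> sqrt (\<Sum>s\<in>UNIV. (\<nu> s - \<nu>' s) ^ 2)"
  proof (rule order_trans[OF opnorm_le_norm real_le_rsqrt])
    have "norm Y ^ 2 = (\<Sum>s\<in>UNIV. (\<nu> s - \<nu>' s) ^ 2 * (\<Sum>a\<in>UNIV. p' s a ^ 2))"
      by (simp add: Y_def norm_power2_as_mat power_mult_distrib sum_distrib_left)
    also have "\<dots> \<le> (\<Sum>s\<in>UNIV. (\<nu> s - \<nu>' s) ^ 2)"
      by (intro sum_mono mult_left_le is_dist_sum_power2_le_one assms) simp
    finally show "norm Y ^ 2 \<le> (\<Sum>s\<in>UNIV. (\<nu> s - \<nu>' s) ^ 2)" .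
  qed
  ultimately show ?thesis
    by linarith
qed

lemma is_policy_is_dist: "is_policy H pol \<Longrightarrow> t \<in> {1..H} \<Longrightarrow> is_dist (pol t s)"
  by (simp add: is_policy_def is_dist_def)

lemma occ_Suc_eq_next_state:
  "occ mu P pol (Suc n) = (\<lambda>s a. next_state (occ mu P pol n) (P (Suc n)) s * pol (Suc (Suc n)) s a)"
  by (simp add: fun_eq_iff next_state_def)

lemma is_dist_occ:
  assumes "is_dist mu" and "\<forall>t\<in>{1..H}. \<forall>s a. is_dist (P t s a)" and "is_policy H pol"
  shows "n < H \<Longrightarrow> is_dist (\<lambda>(s, a). occ mu P pol n s a)"
proof (induction n)
  case 0
  then show ?case
    using is_dist_mult_cond_dist[OF assms(1) is_policy_is_dist[OF assms(3)]] by simp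
next
  case (Suc n)
  have "is_dist (next_state (occ mu P pol n) (P (Suc n)))"
    using Suc assms(2) by (intro is_dist_next_state) auto
  then show ?case
    unfolding occ_Suc_eq_next_state
    using Suc.prems by (intro is_dist_mult_cond_dist is_policy_is_dist[OF assms(3)]) auto
qed

lemma sum_power_weights_Suc:
  fixes c :: "'a::comm_semiring_1"
  shows "(\<Sum>i=1..Suc m. c ^ (Suc m - i) * f i) = f (Suc m) + c * (\<Sum>i=1..m. c ^ (m - i) * f i)"
proof -
  have "c * (\<Sum>i=1..m. c ^ (m - i) * f i) = (\<Sum>i=1..m. c ^ (Suc m - i) * f i)"
    unfolding sum_distrib_left by (intro sum.cong) (simp_all add: Suc_diff_le mult.assoc)
  then show ?thesis
    by (simp add: add.commute)
qed

lemma opnorm_occ_diff_le: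
  fixes mu :: "'s::finite \<Rightarrow> real" and P :: "nat \<Rightarrow> 's \<Rightarrow> 'a::finite \<Rightarrow> 's \<Rightarrow> real"
    and pol1 pol2 :: "nat \<Rightarrow> 's \<Rightarrow> 'a \<Rightarrow> real" and H :: nat and c :: real
  assumes mu: "is_dist mu" and kernel: "\<forall>t\<in>{1..H}. \<forall>s a. is_dist (P t s a)"
    and pol1: "is_policy H pol1" and pol2: "is_policy H pol2"
    and c: "sqrt (real CARD('s) ^ 2 * real CARD('a)) \<le> c"
  shows "Suc n \<le> H \<Longrightarrow> opnorm (as_mat (occ mu P pol1 n) - as_mat (occ mu P pol2 n))
    \<le> (\<Sum>i=1..Suc n. c ^ (Suc n - i) * opnorm (as_mat (pol1 i) - as_mat (pol2 i)))"
proof (induction n)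
  case 0
  have "occ mu P pol 0 = (\<lambda>s a. mu s * pol 1 s a)" for pol
    by (simp add: fun_eq_iff)
  moreover have "is_dist (pol2 1 s)" for s
    using pol2 0 by (simp add: is_policy_is_dist)
  ultimately show ?case
    using opnorm_diff_mult_cond_dist_le[OF mu, where p = "pol1 1" and p' = "pol2 1" and \<nu>' = mu]
    by simp
next
  case (Suc n)
  let ?\<nu> = "\<lambda>pol. next_state (occ mu P pol n) (P (Suc n))"
  have "is_dist (?\<nu> pol1)"
    using Suc.prems kernel by (intro is_dist_next_state is_dist_occ[OF mu kernel pol1]) auto
  then have "opnorm (as_mat (occ mu P pol1 (Suc n)) - as_mat (occ mu P pol2 (Suc n)))
      \<le> opnorm (as_mat (pol1 (Suc (Suc n))) - as_mat (pol2 (Suc (Suc n))))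
        + sqrt (\<Sum>s\<in>UNIV. (?\<nu> pol1 s - ?\<nu> pol2 s) ^ 2)"
    unfolding occ_Suc_eq_next_state using Suc.prems
    by (intro opnorm_diff_mult_cond_dist_le is_policy_is_dist[OF pol2]) auto
  moreover have "sqrt (\<Sum>s\<in>UNIV. (?\<nu> pol1 s - ?\<nu> pol2 s) ^ 2)
      \<le> sqrt (real CARD('s) ^ 2 * real CARD('a)) * opnorm (as_mat (occ mu P pol1 n) - as_mat (occ mu P pol2 n))"
    using Suc.prems kernel by (intro sqrt_sum_power2_next_state_diff_le) auto
  moreover have "\<dots> \<le> c * opnorm (as_mat (occ mu P pol1 n) - as_mat (occ mu P pol2 n))"
    using c by (rule mult_right_mono) (rule opnorm_nonneg)
  moreover have "\<dots> \<le> c * (\<Sum>i=1..Suc n. c ^ (Suc n - i) * opnorm (as_mat (pol1 i) - as_mat (pol2 i)))"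
    using Suc order_trans[OF real_sqrt_ge_zero c] by (intro mult_left_mono) auto
  ultimately show ?case
    unfolding sum_power_weights_Suc[of _ "Suc n"] by linarith
qed

lemma low_rank_mdp_two_le:
  assumes "low_rank_mdp d H P r" and "\<forall>t\<in>{1..H}. \<forall>s a. is_dist (P t s a)" and "1 \<le> H"
  shows "2 \<le> d"
proof (rule ccontr)
  assume "\<not> 2 \<le> d"
  then have "d div 2 = 0"
    by simp
  then have "P 1 s a s' = 0" for s a s'
    using assms(1,3) unfolding low_rank_mdp_def by force
  moreover have "is_dist (P 1 undefined undefined)"
    using assms(2,3) by simp
  ultimately show False
    by (simp add: is_dist_def)
qed

theorem lemma1:
  fixes H d :: nat
    and mu :: "'s::finite \<Rightarrow> real"
    and P :: "nat \<Rightarrow> 's \<Rightarrow> 'a::finite \<Rightarrow> 's \<Rightarrow> real"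
    and r :: "nat \<Rightarrow> 's \<Rightarrow> 'a \<Rightarrow> real"
    and pi_theta pi_beta :: "nat \<Rightarrow> 's \<Rightarrow> 'a \<Rightarrow> real"
  assumes mu_dist: "\<forall>s. mu s \<ge> 0" "(\<Sum>s\<in>UNIV. mu s) = 1"
    and P_kernel: "\<forall>t\<in>{1..H}. \<forall>s a. (\<forall>s'. P t s a s' \<ge> 0) \<and> (\<Sum>s'\<in>UNIV. P t s a s') = 1"
    and low_rank: "low_rank_mdp d H P r"
    and pol_theta: "is_policy H pi_theta"
    and pol_beta: "is_policy H pi_beta"
  shows "\<forall>t\<in>{1..H}.
    opnorm (as_mat (dist_occ mu P pi_theta t) - as_mat (dist_occ mu P pi_beta t))
      \<le> (\<Sum>i=1..t. sqrt (real d * real (CARD('s))^2 * real (CARD('a))) ^ (t - i)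
                     * opnorm (as_mat (pi_theta i) - as_mat (pi_beta i)))"
proof
  fix t assume t: "t \<in> {1..H}"
  then obtain n where n: "t = Suc n" "Suc n \<le> H"
    by (cases t) auto
  have mu: "is_dist mu" and kernel: "\<forall>t\<in>{1..H}. \<forall>s a. is_dist (P t s a)"
    using mu_dist P_kernel by (simp_all add: is_dist_def)
  have "2 \<le> d"
    using low_rank_mdp_two_le[OF low_rank kernel] n by simp
  then have "sqrt (real CARD('s) ^ 2 * real CARD('a)) \<le> sqrt (real d * real CARD('s) ^ 2 * real CARD('a))"
    by (simp add: mult.assoc)
  from opnorm_occ_diff_le[OF mu kernel pol_theta pol_beta this n(2)]
  show "opnorm (as_mat (dist_occ mu P pi_theta t) - as_mat (dist_occ mu P pi_beta t))
      \<le> (\<Sum>i=1..t. sqrt (real d * real (CARD('s))^2 * real (CARD('a))) ^ (t - i)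
                     * opnorm (as_mat (pi_theta i) - as_mat (pi_beta i)))"
    unfolding dist_occ_def n by simp
qed

end
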